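(* Let $n\ge1$ and $1\le k\le d$ be integers, $p=k/d$, and $\mathbf{e}_1,\dots,\mathbf{e}_n\in\mathbb{R}^d$. Let $F_i(\mathbf{w})=\frac12\|\mathbf{w}-\mathbf{e}_i\|_2^2$, $F(\mathbf{w})=\frac1n\sum_{i=1}^nF_i(\mathbf{w})$, and $\mathbf{w}^*=\frac1n\sum_{i=1}^n\mathbf{e}_i$ its minimizer. Consider the following algorithm with step size $\eta>0$: start from arbitrary $\mathbf{w}^{(0)}\in\mathbb{R}^d$ and $\mathbf{b}_i^{(0)}=\mathbf{0}$ for all $i$. At round $t=0,1,2,\dots$: each node $i$ computes $\mathbf{x}_i^{(t)}=\nabla F_i(\mathbf{w}^{(t)})=\mathbf{w}^{(t)}-\mathbf{e}_i$ and independently (across nodes and rounds) chooses a uniformly random subset $S_i^{(t)}\subseteq\{1,\dots,d\}$ of size $k$, sending $x_{ij}^{(t)}$ for $j\in S_i^{(t)}$; the server forms $\mathbf{h}_i'^{(t)}$ with $h'^{(t)}_{ij}=b^{(t)}_{ij}$ if $j\notin S_i^{(t)}$ and $h'^{(t)}_{ij}=b^{(t)}_{ij}+\frac dk(x^{(t)}_{ij}-b^{(t)}_{ij})$ if $j\in S_i^{(t)}$, sets $\hat{\mathbf{x}}^{(t)}=\frac1n\sum_i\mathbf{h}_i'^{(t)}$ and $\mathbf{w}^{(t+1)}=\mathbf{w}^{(t)}-\eta\hat{\mathbf{x}}^{(t)}$, and updates $b^{(t+1)}_{ij}=x^{(t)}_{ij}$ if $j\in S_i^{(t)}$ and $b^{(t+1)}_{ij}=b^{(t)}_{ij}$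 otherwise. If $$\eta\le\min\Big\{\frac{1}{1+\frac8n\big(\frac dk-1\big)},\ \frac p2\Big\},$$ then for all $t\ge0$, $$\mathbb{E}\big[\|\mathbf{w}^{(t+1)}-\mathbf{w}^*\|_2^2\big]\le(1-\eta)^{t+1}\Big[\|\mathbf{w}^{(0)}-\mathbf{w}^*\|_2^2+\frac1n\sum_{i=1}^n\|\nabla F_i(\mathbf{w}^* )\|_2^2\Big],$$ where the expectation is over all the random subsets.
   Context: Gradient descent on a heterogeneous quadratic objective with gradients aggregated by the Rand-$k$-Temporal estimator, where the server's stored vectors $\mathbf{b}_i$ are the most recently received values of each coordinate. *)

theory Defs
  imports "HOL-Probability.Probability"
begin

text \<open>Vectors in R^d are rendered as real^'d with d = CARD('d); coordinates are
indexed by the finite type 'd. Nodes are indexed by i < n.\<close>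

definition Floc :: "(nat \<Rightarrow> real^'d) \<Rightarrow> nat \<Rightarrow> real^'d \<Rightarrow> real" where
  "Floc e i w = (1/2) * (norm (w - e i))\<^sup>2"

definition Fglob :: "nat \<Rightarrow> (nat \<Rightarrow> real^'d) \<Rightarrow> real^'d \<Rightarrow> real" where
  "Fglob n e w = (1 / real n) * (\<Sum>i<n. Floc e i w)"

definition gradF :: "(nat \<Rightarrow> real^'d) \<Rightarrow> nat \<Rightarrow> real^'d \<Rightarrow> real^'d" where
  "gradF e i w = w - e i"

definition wstar :: "nat \<Rightarrow> (nat \<Rightarrow> real^'d) \<Rightarrow> real^'d" where
  "wstar n e = (1 / real n) *\<^sub>R (\<Sum>i<n. e i)"

text \<open>The server iteration. S (t,i) is the subset chosen by node i in round t.
Returns (w^(t), (b_i^(t))_i).\<close>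
fun traj :: "nat \<Rightarrow> nat \<Rightarrow> (nat \<Rightarrow> real^'d) \<Rightarrow> real \<Rightarrow> real^'d
             \<Rightarrow> (nat \<times> nat \<Rightarrow> 'd set) \<Rightarrow> nat \<Rightarrow> (real^'d) \<times> (nat \<Rightarrow> real^'d)" where
  "traj n k e \<eta> w0 S 0 = (w0, (\<lambda>i. 0))"
| "traj n k e \<eta> w0 S (Suc t) =
     (let w = fst (traj n k e \<eta> w0 S t);
          b = snd (traj n k e \<eta> w0 S t);
          x = (\<lambda>i. gradF e i w);
          h = (\<lambda>i. \<chi> j. if j \<in> S (t, i)
                          then b i $ j + (real CARD('d) / real k) * (x i $ j - b i $ j)
                          else b i $ j);
          xhat = (1 / real n) *\<^sub>R (\<Sum>i<n. h i)
      in (w - \<eta> *\<^sub>R xhat, (\<lambda>i. \<chi> j. if j \<in> S (t, i) then x i $ j else b i $ j)))"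

definition ksubsets :: "nat \<Rightarrow> 'd set set" where
  "ksubsets k = {A. card A = k}"

text \<open>Sample space of all choices for rounds 0..t and nodes 0..n-1;
the uniform distribution on it = independent uniform k-subsets.\<close>
definition Omega :: "nat \<Rightarrow> nat \<Rightarrow> nat \<Rightarrow> (nat \<times> nat \<Rightarrow> 'd::finite set) set" where
  "Omega n k t = ({..t} \<times> {..<n}) \<rightarrow>\<^sub>E ksubsets k"

end

theory Submission
  imports Defs
begin

text \<open>With \<open>r = d/k\<close> and \<open>p = k/d\<close>, the proof is a Lyapunov argument for
\<open>\<Phi>(w, b) = \<parallel>w - w\<^sup>*\<parallel>\<^sup>2 + (c/n) \<Sum>\<^sub>i \<parallel>b\<^sub>i - \<nabla>F\<^sub>i(w\<^sup>*)\<parallel>\<^sup>2\<close> with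
\<open>c = 4\<eta>\<^sup>2(r - 1)/(n p)\<close>: one round contracts \<open>\<Phi>\<close> in expectation by the factor \<open>1 - \<eta>\<close>.

The computation splits over coordinates \<open>j\<close>.  Let \<open>\<xi>\<^sub>i\<close> indicate \<open>j \<in> S\<^sub>i\<close>, let
\<open>u = w\<^sub>j - w\<^sup>*\<^sub>j\<close> and \<open>D\<^sub>i = b\<^sub>i\<^sub>j - \<nabla>F\<^sub>i(w\<^sup>*)\<^sub>j\<close>.  Since \<open>w\<^sup>*\<close> is the mean of the \<open>e\<^sub>i\<close>,
the new error is \<open>(1 - \<eta>) u + \<Sum>\<^sub>i (\<eta>/n)(u - D\<^sub>i)(1 - r \<xi>\<^sub>i)\<close>, and the variables
\<open>1 - r \<xi>\<^sub>i\<close> are centred and, the nodes sampling independently, pairwise uncorrelated with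
variance \<open>r - 1\<close>.  The stored coordinate becomes \<open>u\<close> with probability \<open>p\<close> and stays
\<open>D\<^sub>i\<close> otherwise.  After \<open>(u - D\<^sub>i)\<^sup>2 \<le> 2u\<^sup>2 + 2D\<^sub>i\<^sup>2\<close>, the two step-size conditions are what
make the coefficients of \<open>u\<^sup>2\<close> and of \<open>\<Sum>\<^sub>i D\<^sub>i\<^sup>2\<close> at most \<open>(1 - \<eta>)\<close> times those in \<open>\<Phi>\<close>.

Conditioning on the earlier rounds iterates the contraction.  Finally \<open>\<Phi>\<close> dominates
\<open>\<parallel>w - w\<^sup>*\<parallel>\<^sup>2\<close>, and since the memory starts at \<open>b = 0\<close> and \<open>c \<le> 1\<close>, the initial \<open>\<Phi>\<close> is
bounded by the bracket in the claim.\<close>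

section \<open>Moments under independent sampling\<close>

lemma expectation_square_orthogonal_sum:
  fixes M :: "'a pmf" and z :: "nat \<Rightarrow> 'a \<Rightarrow> real"
  assumes fin: "finite (set_pmf M)"
    and mean: "\<And>i. i < n \<Longrightarrow> measure_pmf.expectation M (z i) = 0"
    and cov: "\<And>i i'. i < n \<Longrightarrow> i' < n \<Longrightarrow>
      measure_pmf.expectation M (\<lambda>x. z i x * z i' x) = (if i = i' then q else 0)"
  shows "measure_pmf.expectation M (\<lambda>x. (a + (\<Sum>i<n. \<beta> i * z i x))\<^sup>2)
    = a\<^sup>2 + q * (\<Sum>i<n. (\<beta> i)\<^sup>2)"
proof -
  have int: "integrable M f" for f :: "'a \<Rightarrow> real"
    using fin by (rule integrable_measure_pmf_finite)
  have expand: "(a + (\<Sum>i<n. \<beta> i * z i x))\<^sup>2 = a\<^sup>2 + (\<Sum>i<n. (2 * a * \<beta> i) * z i x)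
      + (\<Sum>i<n. \<Sum>i'<n. (\<beta> i * \<beta> i') * (z i x * z i' x))" for x
    by (simp add: power2_eq_square algebra_simps sum_product sum_distrib_left)
  have "measure_pmf.expectation M (\<lambda>x. (a + (\<Sum>i<n. \<beta> i * z i x))\<^sup>2)
      = a\<^sup>2 + (\<Sum>i<n. (2 * a * \<beta> i) * measure_pmf.expectation M (z i))
        + (\<Sum>i<n. \<Sum>i'<n. (\<beta> i * \<beta> i') * measure_pmf.expectation M (\<lambda>x. z i x * z i' x))"
    unfolding expand by (simp add: int Bochner_Integration.integral_sum)
  also have "\<dots> = a\<^sup>2 + (\<Sum>i<n. \<Sum>i'<n. (\<beta> i * \<beta> i') * (if i = i' then q else 0))"
    by (simp add: mean cov)
  also have "\<dots> = a\<^sup>2 + q * (\<Sum>i<n. (\<beta> i)\<^sup>2)"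
    by (simp add: sum_distrib_left power2_eq_square if_distrib mult_ac cong: if_cong)
  finally show ?thesis .
qed

lemma rescaled_inclusion_moments:
  fixes M :: "'a pmf" and \<xi> :: "nat \<Rightarrow> 'a \<Rightarrow> real"
  assumes fin: "finite (set_pmf M)"
    and zero_one: "\<And>i x. \<xi> i x \<in> {0, 1}"
    and mean: "\<And>i. i < n \<Longrightarrow> measure_pmf.expectation M (\<xi> i) = p"
    and pair: "\<And>i i'. i < n \<Longrightarrow> i' < n \<Longrightarrow> i \<noteq> i' \<Longrightarrow>
      measure_pmf.expectation M (\<lambda>x. \<xi> i x * \<xi> i' x) = p\<^sup>2"
    and pr: "p * r = 1"
  shows "i < n \<Longrightarrow> measure_pmf.expectation M (\<lambda>x. 1 - r * \<xi> i x) = 0"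
    and "i < n \<Longrightarrow> i' < n \<Longrightarrow>
      measure_pmf.expectation M (\<lambda>x. (1 - r * \<xi> i x) * (1 - r * \<xi> i' x))
        = (if i = i' then r - 1 else 0)"
proof -
  have int: "integrable M f" for f :: "'a \<Rightarrow> real"
    using fin by (rule integrable_measure_pmf_finite)
  show "measure_pmf.expectation M (\<lambda>x. 1 - r * \<xi> i x) = 0" if "i < n"
    using mean[OF that] pr by (simp add: int mult.commute)
  show "measure_pmf.expectation M (\<lambda>x. (1 - r * \<xi> i x) * (1 - r * \<xi> i' x))
      = (if i = i' then r - 1 else 0)" if i: "i < n" and i': "i' < n"
  proof (cases "i = i'")
    case True
    have eq: "(\<lambda>x. (1 - r * \<xi> i x) * (1 - r * \<xi> i x)) = (\<lambda>x. 1 + (r * r - 2 * r) * \<xi> i x)"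
      using zero_one[of i] by (auto simp: fun_eq_iff algebra_simps)
    have "1 + (r * r - 2 * r) * p = 1 + r * (p * r) - 2 * (p * r)"
      by (simp add: algebra_simps)
    also have "\<dots> = r - 1"
      using pr by simp
    finally have "measure_pmf.expectation M (\<lambda>x. (1 - r * \<xi> i x) * (1 - r * \<xi> i x)) = r - 1"
      using mean[OF i] by (simp add: eq int)
    with True show ?thesis
      by simp
  next
    case False
    have "(1 - r * \<xi> i x) * (1 - r * \<xi> i' x)
        = 1 - r * \<xi> i x - r * \<xi> i' x + (r * r) * (\<xi> i x * \<xi> i' x)" for x
      by (simp add: algebra_simps)
    then show ?thesis
      using False mean[OF i] mean[OF i'] pair[OF i i' False] pr
      by (simp add: int power2_eq_square algebra_simps)
  qed
qed

lemma expectation_coordinate_step: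
  fixes M :: "'a pmf" and \<xi> :: "nat \<Rightarrow> 'a \<Rightarrow> real"
  assumes fin: "finite (set_pmf M)"
    and zero_one: "\<And>i x. \<xi> i x \<in> {0, 1}"
    and mean: "\<And>i. i < n \<Longrightarrow> measure_pmf.expectation M (\<xi> i) = p"
    and pair: "\<And>i i'. i < n \<Longrightarrow> i' < n \<Longrightarrow> i \<noteq> i' \<Longrightarrow>
      measure_pmf.expectation M (\<lambda>x. \<xi> i x * \<xi> i' x) = p\<^sup>2"
    and pr: "p * r = 1"
  shows "measure_pmf.expectation M (\<lambda>x.
      (a + (\<Sum>i<n. \<beta> i * (1 - r * \<xi> i x)))\<^sup>2
      + c * (\<Sum>i<n. (\<xi> i x * u + (1 - \<xi> i x) * D i)\<^sup>2))
    = a\<^sup>2 + (r - 1) * (\<Sum>i<n. (\<beta> i)\<^sup>2) + c * (\<Sum>i<n. p * u\<^sup>2 + (1 - p) * (D i)\<^sup>2)"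
proof -
  have int: "integrable M f" for f :: "'a \<Rightarrow> real"
    using fin by (rule integrable_measure_pmf_finite)
  have new_iterate: "measure_pmf.expectation M (\<lambda>x. (a + (\<Sum>i<n. \<beta> i * (1 - r * \<xi> i x)))\<^sup>2)
      = a\<^sup>2 + (r - 1) * (\<Sum>i<n. (\<beta> i)\<^sup>2)"
    using rescaled_inclusion_moments[of M \<xi> n p r, OF fin zero_one mean pair pr]
    by (intro expectation_square_orthogonal_sum[OF fin]) simp_all
  have refresh: "(\<xi> i x * u + (1 - \<xi> i x) * D i)\<^sup>2 = (D i)\<^sup>2 + (u\<^sup>2 - (D i)\<^sup>2) * \<xi> i x" for i x
    using zero_one[of i x] by (auto simp: power2_eq_square)
  have new_memory: "measure_pmf.expectation M (\<lambda>x. \<Sum>i<n. (\<xi> i x * u + (1 - \<xi> i x) * D i)\<^sup>2)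
      = (\<Sum>i<n. p * u\<^sup>2 + (1 - p) * (D i)\<^sup>2)"
    unfolding refresh
    by (simp add: int Bochner_Integration.integral_sum mean algebra_simps)
  show ?thesis
    by (simp add: int new_iterate new_memory)
qed

lemma expectation_Pi_pmf_component:
  fixes f :: "'b \<Rightarrow> real"
  assumes "finite A" "x \<in> A"
  shows "measure_pmf.expectation (Pi_pmf A dflt p) (\<lambda>R. f (R x)) = measure_pmf.expectation (p x) f"
proof -
  have "measure_pmf.expectation (Pi_pmf A dflt p) (\<lambda>R. f (R x))
      = measure_pmf.expectation (map_pmf (\<lambda>R. R x) (Pi_pmf A dflt p)) f"
    by simp
  then show ?thesis
    using assms by (simp add: Pi_pmf_component)
qed

lemma expectation_Pi_pmf_two_components:
  fixes p :: "'a \<Rightarrow> 'b pmf" and f g :: "'b \<Rightarrow> real"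
  assumes A: "finite A" "x \<in> A" "y \<in> A" "x \<noteq> y"
    and int: "integrable (p x) f" "integrable (p y) g"
    and nonneg: "\<And>v. f v \<ge> 0" "\<And>v. g v \<ge> 0"
  shows "measure_pmf.expectation (Pi_pmf A dflt p) (\<lambda>R. f (R x) * g (R y))
    = measure_pmf.expectation (p x) f * measure_pmf.expectation (p y) g"
proof -
  define h where "h z = (if z = x then f else if z = y then g else (\<lambda>_. 1))" for z
  have "(\<Prod>z\<in>A. h z (R z)) = f (R x) * g (R y)" for R
  proof -
    have "(\<Prod>z\<in>A. h z (R z)) = (\<Prod>z\<in>{x, y}. h z (R z))"
      using A by (intro prod.mono_neutral_right) (auto simp: h_def)
    then show ?thesis
      using A by (simp add: h_def)
  qed
  moreover have "(\<Prod>z\<in>A. measure_pmf.expectation (p z) (h z))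
      = (\<Prod>z\<in>{x, y}. measure_pmf.expectation (p z) (h z))"
    using A by (intro prod.mono_neutral_right) (auto simp: h_def)
  moreover have "measure_pmf.expectation (Pi_pmf A dflt p) (\<lambda>R. \<Prod>z\<in>A. h z (R z))
      = (\<Prod>z\<in>A. measure_pmf.expectation (p z) (h z))"
    using A int nonneg by (intro expectation_prod_Pi_pmf) (auto simp: h_def)
  ultimately show ?thesis
    using A by (simp add: h_def)
qed

lemma expectation_pair_pmf_le:
  fixes g :: "'a \<times> 'b \<Rightarrow> real"
  assumes fin: "finite (set_pmf P)" "finite (set_pmf R)"
    and le: "\<And>x. x \<in> set_pmf P \<Longrightarrow> measure_pmf.expectation R (\<lambda>y. g (x, y)) \<le> f x"
  shows "measure_pmf.expectation (pair_pmf P R) g \<le> measure_pmf.expectation P f"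
proof -
  have "pair_pmf P R = bind_pmf P (\<lambda>x. map_pmf (Pair x) R)"
    by (simp add: pair_pmf_def map_pmf_def)
  then have "measure_pmf.expectation (pair_pmf P R) g
      = (\<Sum>x\<in>set_pmf P. pmf P x * measure_pmf.expectation R (\<lambda>y. g (x, y)))"
    using fin by (simp add: pmf_expectation_bind[of "set_pmf P"])
  also have "\<dots> \<le> (\<Sum>x\<in>set_pmf P. pmf P x * f x)"
    by (intro sum_mono mult_left_mono le) auto
  also have "\<dots> = measure_pmf.expectation P f"
    using fin by (simp add: integral_measure_pmf[of "set_pmf P"] mult.commute)
  finally show ?thesis .
qed

section \<open>The scalar contraction inequality\<close>

lemma contraction_coefficients:
  fixes \<eta> p q c n :: real
  assumes n: "n > 0" and \<eta>: "\<eta> > 0" and q: "q \<ge> 0" and p: "p > 0"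
    and step_size: "\<eta> * (1 + 8 / n * q) \<le> 1" "\<eta> \<le> p / 2"
    and c: "c = 4 * \<eta>\<^sup>2 * q / (n * p)"
  shows "(1 - \<eta>)\<^sup>2 + 2 * q * \<eta>\<^sup>2 / n + c * p \<le> 1 - \<eta>"
    and "2 * q * \<eta>\<^sup>2 / n\<^sup>2 + c * (1 - p) / n \<le> (1 - \<eta>) * c / n"
proof -
  have cp: "c * p = 4 * \<eta>\<^sup>2 * q / n"
    using n p by (simp add: c field_simps)
  \<comment> \<open>the first claim is equivalent to \<open>\<eta> (1 + 6 q / n) \<le> 1\<close>\<close>
  have "\<eta> * (1 + 6 / n * q) \<le> \<eta> * (1 + 8 / n * q)"
    using n \<eta> q by (intro mult_left_mono) (auto simp: field_simps)
  also have "\<dots> \<le> 1"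
    by (rule step_size(1))
  finally have "\<eta> * (\<eta> * (1 + 6 / n * q)) \<le> \<eta> * 1"
    using \<eta> by (intro mult_left_mono) auto
  then show "(1 - \<eta>)\<^sup>2 + 2 * q * \<eta>\<^sup>2 / n + c * p \<le> 1 - \<eta>"
    unfolding cp by (simp add: power2_eq_square field_simps)
  have "2 * q * \<eta>\<^sup>2 / n = c * (p / 2)"
    using cp by (simp add: field_simps)
  also have "\<dots> \<le> c * (p - \<eta>)"
    using n p q step_size(2) by (intro mult_left_mono) (auto simp: c)
  finally have "2 * q * \<eta>\<^sup>2 / n / n \<le> c * (p - \<eta>) / n"
    using n by (intro divide_right_mono) auto
  then show "2 * q * \<eta>\<^sup>2 / n\<^sup>2 + c * (1 - p) / n \<le> (1 - \<eta>) * c / n"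
    by (simp add: power2_eq_square diff_divide_distrib algebra_simps)
qed

lemma coordinate_step_bound:
  fixes \<eta> p r c u :: real and D :: "nat \<Rightarrow> real"
  assumes n: "n > 0" and \<eta>: "\<eta> > 0" and r: "r \<ge> 1" and p: "p > 0"
    and step_size: "\<eta> * (1 + 8 / real n * (r - 1)) \<le> 1" "\<eta> \<le> p / 2"
    and c: "c = 4 * \<eta>\<^sup>2 * (r - 1) / (real n * p)"
  shows "((1 - \<eta>) * u)\<^sup>2 + (r - 1) * (\<Sum>i<n. (\<eta> / real n * (u - D i))\<^sup>2)
      + c / real n * (\<Sum>i<n. p * u\<^sup>2 + (1 - p) * (D i)\<^sup>2)
    \<le> (1 - \<eta>) * (u\<^sup>2 + c / real n * (\<Sum>i<n. (D i)\<^sup>2))"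
proof -
  define S where "S = (\<Sum>i<n. (D i)\<^sup>2)"
  have "S \<ge> 0" "c \<ge> 0"
    using r p by (auto simp: S_def c intro: sum_nonneg)
  have "(\<Sum>i<n. (\<eta> / real n * (u - D i))\<^sup>2) = (\<eta> / real n)\<^sup>2 * (\<Sum>i<n. (u - D i)\<^sup>2)"
    by (simp only: sum_distrib_left power_mult_distrib)
  also have "\<dots> \<le> (\<eta> / real n)\<^sup>2 * (\<Sum>i<n. 2 * u\<^sup>2 + 2 * (D i)\<^sup>2)"
  proof (intro mult_left_mono sum_mono)
    show "(u - D i)\<^sup>2 \<le> 2 * u\<^sup>2 + 2 * (D i)\<^sup>2" for i
      using zero_le_power2[of "u + D i"] by (simp add: power2_eq_square algebra_simps)
  qed simp
  also have "\<dots> = (\<eta> / real n)\<^sup>2 * (2 * real n * u\<^sup>2 + 2 * S)"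
    by (simp add: S_def sum.distrib sum_distrib_left)
  finally have variance: "(r - 1) * (\<Sum>i<n. (\<eta> / real n * (u - D i))\<^sup>2)
      \<le> (r - 1) * ((\<eta> / real n)\<^sup>2 * (2 * real n * u\<^sup>2 + 2 * S))"
    using r by (intro mult_left_mono) auto
  have memory: "(\<Sum>i<n. p * u\<^sup>2 + (1 - p) * (D i)\<^sup>2) = real n * p * u\<^sup>2 + (1 - p) * S"
    by (simp add: S_def sum.distrib sum_distrib_left)
  have "((1 - \<eta>) * u)\<^sup>2 + (r - 1) * (\<Sum>i<n. (\<eta> / real n * (u - D i))\<^sup>2)
      + c / real n * (\<Sum>i<n. p * u\<^sup>2 + (1 - p) * (D i)\<^sup>2)
    \<le> ((1 - \<eta>) * u)\<^sup>2 + (r - 1) * ((\<eta> / real n)\<^sup>2 * (2 * real n * u\<^sup>2 + 2 * S))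
      + c / real n * (real n * p * u\<^sup>2 + (1 - p) * S)"
    unfolding memory using variance by simp
  also have "\<dots> = ((1 - \<eta>)\<^sup>2 + 2 * (r - 1) * \<eta>\<^sup>2 / real n + c * p) * u\<^sup>2
      + (2 * (r - 1) * \<eta>\<^sup>2 / (real n)\<^sup>2 + c * (1 - p) / real n) * S"
    using n by (simp add: power2_eq_square field_simps)
  also have "\<dots> \<le> (1 - \<eta>) * u\<^sup>2 + ((1 - \<eta>) * c / real n) * S"
    using contraction_coefficients[of "real n" \<eta> "r - 1" p c] n \<eta> r p step_size c \<open>S \<ge> 0\<close>
    by (intro add_mono mult_right_mono) auto
  also have "\<dots> = (1 - \<eta>) * (u\<^sup>2 + c / real n * S)"
    by (simp add: algebra_simps)
  finally show ?thesis
    by (simp add: S_def)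
qed

lemma lyapunov_weight_bounds:
  fixes \<eta> p r :: real
  assumes n: "n > 0" and r: "r \<ge> 1" and pr: "p * r = 1" and \<eta>: "0 \<le> \<eta>" "\<eta> \<le> p / 2"
  shows "0 \<le> 4 * \<eta>\<^sup>2 * (r - 1) / (real n * p)" and "4 * \<eta>\<^sup>2 * (r - 1) / (real n * p) \<le> 1"
proof -
  have "p = 1 / r"
    using pr r by (simp add: eq_divide_eq)
  then have p: "0 < p" "p \<le> 1"
    using r by simp_all
  then show "0 \<le> 4 * \<eta>\<^sup>2 * (r - 1) / (real n * p)"
    using r by simp
  have "4 * \<eta>\<^sup>2 * (r - 1) / (real n * p) \<le> 4 * (p / 2)\<^sup>2 * (r - 1) / (real n * p)"
    using n p r \<eta> by (intro divide_right_mono mult_right_mono mult_left_mono power_mono) auto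
  also have "\<dots> = (1 - p) / real n"
    using n p pr by (simp add: power2_eq_square field_simps)
  also have "\<dots> \<le> 1"
    using n p by (simp add: divide_le_eq)
  finally show "4 * \<eta>\<^sup>2 * (r - 1) / (real n * p) \<le> 1" .
qed

lemma le_min_step_size:
  fixes \<eta> r x :: real
  assumes "r \<ge> 1" and "\<eta> \<le> min (1 / (1 + 8 / real n * (r - 1))) x"
  shows "\<eta> * (1 + 8 / real n * (r - 1)) \<le> 1" and "\<eta> \<le> x"
proof -
  have "1 + 8 / real n * (r - 1) > 0"
    using assms(1) by (simp add: add_pos_nonneg)
  then show "\<eta> * (1 + 8 / real n * (r - 1)) \<le> 1"
    using assms(2) by (simp add: le_divide_eq)
  show "\<eta> \<le> x"
    using assms(2) by simp
qed

section \<open>Uniformly random k-subsets\<close>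

lemma ksubsets_nonempty:
  assumes "k \<le> CARD('d::finite)"
  shows "ksubsets k \<noteq> ({} :: 'd set set)"
proof -
  obtain B :: "'d set" where "card B = k"
    using obtain_subset_with_card_n[OF assms] by blast
  then show ?thesis
    unfolding ksubsets_def by auto
qed

lemma card_ksubsets: "card (ksubsets k :: 'd::finite set set) = CARD('d) choose k"
proof -
  have "ksubsets k = {B :: 'd set. B \<subseteq> UNIV \<and> card B = k}"
    unfolding ksubsets_def by auto
  then show ?thesis
    using n_subsets[of "UNIV :: 'd set" k] by simp
qed

lemma card_ksubsets_containing:
  assumes "k \<ge> 1"
  shows "card {A \<in> ksubsets k. (j :: 'd::finite) \<in> A} = (CARD('d) - 1) choose (k - 1)"
proof -
  let ?B = "{B. B \<subseteq> UNIV - {j} \<and> card B = k - 1}"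
  have "{A \<in> ksubsets k. j \<in> A} = insert j ` ?B"
  proof (intro equalityI subsetI)
    fix A
    assume "A \<in> {A \<in> ksubsets k. j \<in> A}"
    then have "A - {j} \<in> ?B" and "A = insert j (A - {j})"
      by (auto simp: ksubsets_def)
    then show "A \<in> insert j ` ?B"
      by blast
  next
    fix A
    assume "A \<in> insert j ` ?B"
    then obtain B where "B \<in> ?B" "A = insert j B"
      by auto
    then show "A \<in> {A \<in> ksubsets k. j \<in> A}"
      using assms by (auto simp: ksubsets_def card_insert_if)
  qed
  moreover have "inj_on (insert j) ?B"
    by (rule inj_onI) (auto simp: insert_ident)
  ultimately have "card {A \<in> ksubsets k. j \<in> A} = card ?B"
    by (simp add: card_image)
  also have "\<dots> = card (UNIV - {j} :: 'd set) choose (k - 1)"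
    by (rule n_subsets) simp
  finally show ?thesis
    by (simp add: card_Diff_singleton)
qed

lemma expectation_indicator_ksubsets:
  assumes "1 \<le> k" "k \<le> CARD('d::finite)"
  shows "measure_pmf.expectation (pmf_of_set (ksubsets k :: 'd set set)) (\<lambda>A. indicator A j)
    = real k / real CARD('d)"
proof -
  obtain d' k' where d': "CARD('d) = Suc d'" and k': "k = Suc k'"
    using assms by (cases "CARD('d)"; cases k) auto
  have "sum (\<lambda>A. indicator A j) (ksubsets k :: 'd set set) = real (card {A \<in> ksubsets k. j \<in> A})"
    by (simp add: indicator_def sum.If_cases Int_def)
  then have "measure_pmf.expectation (pmf_of_set (ksubsets k :: 'd set set)) (\<lambda>A. indicator A j)
      = real (card {A \<in> ksubsets k. j \<in> A}) / real (card (ksubsets k :: 'd set set))"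
    using ksubsets_nonempty[OF assms(2)] by (simp add: integral_pmf_of_set)
  also have "\<dots> = real ((CARD('d) - 1) choose (k - 1)) / real (CARD('d) choose k)"
    by (simp only: card_ksubsets_containing[OF assms(1)] card_ksubsets)
  also have "\<dots> = real (d' choose k') / real (Suc d' choose Suc k')"
    by (simp add: d' k' del: binomial_Suc_Suc)
  also have "\<dots> = real (Suc k') / real (Suc d')"
    using Suc_times_binomial_eq[of d' k'] assms d' k'
    by (simp add: field_simps flip: of_nat_mult del: binomial_Suc_Suc of_nat_Suc)
  finally show ?thesis
    using d' k' by simp
qed

definition choices_pmf :: "nat \<Rightarrow> (nat \<times> nat) set \<Rightarrow> (nat \<times> nat \<Rightarrow> 'd::finite set) pmf" where
  "choices_pmf k I = Pi_pmf I undefined (\<lambda>_. pmf_of_set (ksubsets k))"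

lemma finite_set_choices_pmf:
  assumes "k \<le> CARD('d::finite)" "finite I"
  shows "finite (set_pmf (choices_pmf k I :: (nat \<times> nat \<Rightarrow> 'd set) pmf))"
  using assms ksubsets_nonempty[OF assms(1)]
  by (auto simp: choices_pmf_def set_Pi_pmf)

lemma pmf_of_set_Omega:
  assumes "k \<le> CARD('d::finite)"
  shows "pmf_of_set (Omega n k t :: (nat \<times> nat \<Rightarrow> 'd set) set) = choices_pmf k ({..<Suc t} \<times> {..<n})"
proof -
  have "(Omega n k t :: (nat \<times> nat \<Rightarrow> 'd set) set) = PiE_dflt ({..<Suc t} \<times> {..<n}) undefined (\<lambda>_. ksubsets k)"
    unfolding Omega_def PiE_dflt_def PiE_def Pi_def extensional_def
    by (auto simp: lessThan_Suc_atMost)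
  then show ?thesis
    unfolding choices_pmf_def using ksubsets_nonempty[OF assms] by (simp add: Pi_pmf_of_set)
qed

lemma choices_pmf_Suc:
  "choices_pmf k ({..<Suc m} \<times> {..<n}) =
    map_pmf (\<lambda>(S, T) x. if x \<in> {..<m} \<times> {..<n} then S x else T x)
      (pair_pmf (choices_pmf k ({..<m} \<times> {..<n})) (choices_pmf k ({m} \<times> {..<n})))"
proof -
  have "{..<Suc m} \<times> {..<n} = {..<m} \<times> {..<n} \<union> {m} \<times> {..<n}"
    by auto
  then show ?thesis
    unfolding choices_pmf_def by (simp only:) (rule Pi_pmf_union; auto)
qed

lemma round_moments:
  fixes m n :: nat
  assumes k: "1 \<le> k" "k \<le> CARD('d::finite)" and i: "i < n"
  defines "M \<equiv> map_pmf (\<lambda>S i. S (m, i)) (choices_pmf k ({m} \<times> {..<n}) :: (nat \<times> nat \<Rightarrow> 'd set) pmf)"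
  shows "measure_pmf.expectation M (\<lambda>T. indicator (T i) j) = real k / real CARD('d)"
    and "i' < n \<Longrightarrow> i \<noteq> i' \<Longrightarrow>
      measure_pmf.expectation M (\<lambda>T. indicator (T i) j * indicator (T i') j)
        = (real k / real CARD('d))\<^sup>2"
proof -
  let ?Q = "pmf_of_set (ksubsets k :: 'd set set)"
  have fin: "finite (set_pmf ?Q)"
    using ksubsets_nonempty[OF k(2)] by simp
  show "measure_pmf.expectation M (\<lambda>T. indicator (T i) j) = real k / real CARD('d)"
    using i unfolding M_def choices_pmf_def
    by (simp add: expectation_Pi_pmf_component[where f = "\<lambda>A. indicator A j"]
        expectation_indicator_ksubsets[OF k])
  show "measure_pmf.expectation M (\<lambda>T. indicator (T i) j * indicator (T i') j)
      = (real k / real CARD('d))\<^sup>2" if "i' < n" "i \<noteq> i'"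
    using i that unfolding M_def choices_pmf_def
    by (simp add: expectation_Pi_pmf_two_components[where f = "\<lambda>A. indicator A j" and g = "\<lambda>A. indicator A j"]
        integrable_measure_pmf_finite[OF fin] expectation_indicator_ksubsets[OF k] power2_eq_square)
qed

section \<open>One round of the algorithm\<close>

definition step_w :: "nat \<Rightarrow> nat \<Rightarrow> (nat \<Rightarrow> real^'d) \<Rightarrow> real \<Rightarrow> real^'d \<Rightarrow> (nat \<Rightarrow> real^'d)
    \<Rightarrow> (nat \<Rightarrow> 'd set) \<Rightarrow> real^'d" where
  "step_w n k e \<eta> w b T = w - \<eta> *\<^sub>R ((1 / real n) *\<^sub>R (\<Sum>i<n. \<chi> j. if j \<in> T i
      then b i $ j + (real CARD('d) / real k) * (gradF e i w $ j - b i $ j) else b i $ j))"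

definition step_b :: "(nat \<Rightarrow> real^'d) \<Rightarrow> real^'d \<Rightarrow> (nat \<Rightarrow> real^'d) \<Rightarrow> (nat \<Rightarrow> 'd set)
    \<Rightarrow> nat \<Rightarrow> real^'d" where
  "step_b e w b T = (\<lambda>i. \<chi> j. if j \<in> T i then gradF e i w $ j else b i $ j)"

lemma traj_Suc_step:
  "traj n k e \<eta> w0 S (Suc t) =
    (step_w n k e \<eta> (fst (traj n k e \<eta> w0 S t)) (snd (traj n k e \<eta> w0 S t)) (\<lambda>i. S (t, i)),
     step_b e (fst (traj n k e \<eta> w0 S t)) (snd (traj n k e \<eta> w0 S t)) (\<lambda>i. S (t, i)))"
  by (simp add: Let_def step_w_def step_b_def)

definition lyapunov :: "nat \<Rightarrow> (nat \<Rightarrow> real^'d) \<Rightarrow> real \<Rightarrow> real^'d \<Rightarrow> (nat \<Rightarrow> real^'d) \<Rightarrow> real" where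
  "lyapunov n e c w b = (norm (w - wstar n e))\<^sup>2
      + c / real n * (\<Sum>i<n. (norm (b i - gradF e i (wstar n e)))\<^sup>2)"

lemma norm_le_lyapunov: "0 \<le> c \<Longrightarrow> (norm (w - wstar n e))\<^sup>2 \<le> lyapunov n e c w b"
  unfolding lyapunov_def by (auto intro!: sum_nonneg divide_nonneg_nonneg mult_nonneg_nonneg)

lemma lyapunov_initial_le:
  assumes "0 \<le> c" "c \<le> 1"
  shows "lyapunov n e c w (\<lambda>_. 0)
    \<le> (norm (w - wstar n e))\<^sup>2 + 1 / real n * (\<Sum>i<n. (norm (gradF e i (wstar n e)))\<^sup>2)"
  unfolding lyapunov_def using assms
  by (auto intro!: divide_right_mono mult_left_le_one_le sum_nonneg)

lemma norm_power2_vec: "(norm (v :: real^'n))\<^sup>2 = (\<Sum>j\<in>UNIV. (v $ j)\<^sup>2)"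
  unfolding power2_norm_eq_inner inner_vec_def by (simp add: power2_eq_square)

lemma lyapunov_coordinates:
  "lyapunov n e c w b = (\<Sum>j\<in>UNIV. (w $ j - wstar n e $ j)\<^sup>2
      + c / real n * (\<Sum>i<n. (b i $ j - gradF e i (wstar n e) $ j)\<^sup>2))"
  unfolding lyapunov_def norm_power2_vec
  by (simp add: sum.distrib sum_distrib_left sum.swap[of _ UNIV "{..<_}"])

lemma step_w_coordinate:
  fixes w :: "real^'d" and T :: "nat \<Rightarrow> 'd set"
  assumes n: "n > 0"
  shows "step_w n k e \<eta> w b T $ j - wstar n e $ j
    = (1 - \<eta>) * (w $ j - wstar n e $ j)
      + (\<Sum>i<n. (\<eta> / real n * ((w $ j - wstar n e $ j) - (b i $ j - gradF e i (wstar n e) $ j)))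
          * (1 - real CARD('d) / real k * indicator (T i) j))"
proof -
  let ?r = "real CARD('d) / real k"
  let ?u = "w $ j - wstar n e $ j"
  let ?D = "\<lambda>i. b i $ j - gradF e i (wstar n e) $ j"
  have estimate: "(if j \<in> T i then b i $ j + ?r * (gradF e i w $ j - b i $ j) else b i $ j)
      = gradF e i w $ j - (1 - ?r * indicator (T i) j) * (?u - ?D i)" for i
    by (simp add: indicator_def gradF_def algebra_simps add_divide_distrib)
  have gradient_sum: "(\<Sum>i<n. gradF e i w $ j) = real n * ?u"
    using n by (simp add: gradF_def wstar_def sum_subtractf algebra_simps)
  let ?X = "\<Sum>i<n. (1 - ?r * indicator (T i) j) * (?u - ?D i)"
  have "step_w n k e \<eta> w b T $ j = w $ j - \<eta> / real n * (real n * ?u - ?X)"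
    by (simp add: step_w_def estimate sum_subtractf gradient_sum)
  moreover have "\<eta> / real n * (real n * ?u - ?X) = \<eta> * ?u - \<eta> / real n * ?X"
    using n by (simp add: right_diff_distrib)
  moreover have "(\<Sum>i<n. (\<eta> / real n * (?u - ?D i)) * (1 - ?r * indicator (T i) j)) = \<eta> / real n * ?X"
    by (simp add: sum_distrib_left mult_ac)
  ultimately show ?thesis
    by (simp add: algebra_simps)
qed

lemma step_b_coordinate:
  "step_b e w b T i $ j - gradF e i (wstar n e) $ j
    = indicator (T i) j * (w $ j - wstar n e $ j)
      + (1 - indicator (T i) j) * (b i $ j - gradF e i (wstar n e) $ j)"
  by (simp add: step_b_def indicator_def gradF_def)

lemma lyapunov_step_contraction:
  fixes M :: "(nat \<Rightarrow> 'd::finite set) pmf" and w :: "real^'d"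
  assumes fin: "finite (set_pmf M)"
    and mean: "\<And>i j. i < n \<Longrightarrow> measure_pmf.expectation M (\<lambda>T. indicator (T i) j) = p"
    and pair: "\<And>i i' j. i < n \<Longrightarrow> i' < n \<Longrightarrow> i \<noteq> i' \<Longrightarrow>
      measure_pmf.expectation M (\<lambda>T. indicator (T i) j * indicator (T i') j) = p\<^sup>2"
    and pr: "p * (real CARD('d) / real k) = 1"
    and n: "n > 0" and \<eta>: "\<eta> > 0" and r: "real CARD('d) / real k \<ge> 1"
    and step_size: "\<eta> * (1 + 8 / real n * (real CARD('d) / real k - 1)) \<le> 1" "\<eta> \<le> p / 2"
    and c: "c = 4 * \<eta>\<^sup>2 * (real CARD('d) / real k - 1) / (real n * p)"
  shows "measure_pmf.expectation M (\<lambda>T. lyapunov n e c (step_w n k e \<eta> w b T) (step_b e w b T))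
    \<le> (1 - \<eta>) * lyapunov n e c w b"
proof -
  let ?r = "real CARD('d) / real k"
  let ?u = "\<lambda>j. w $ j - wstar n e $ j"
  let ?D = "\<lambda>j i. b i $ j - gradF e i (wstar n e) $ j"
  let ?F = "\<lambda>j T. ((1 - \<eta>) * ?u j + (\<Sum>i<n. (\<eta> / real n * (?u j - ?D j i)) * (1 - ?r * indicator (T i) j)))\<^sup>2
      + c / real n * (\<Sum>i<n. (indicator (T i) j * ?u j + (1 - indicator (T i) j) * ?D j i)\<^sup>2)"
  have "0 < p * ?r" "0 < ?r"
    unfolding pr using r by simp_all
  then have p: "p > 0"
    by (rule zero_less_mult_pos2)
  have "measure_pmf.expectation M (\<lambda>T. lyapunov n e c (step_w n k e \<eta> w b T) (step_b e w b T))
      = (\<Sum>j\<in>UNIV. measure_pmf.expectation M (?F j))"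
    unfolding lyapunov_coordinates step_w_coordinate[OF n] step_b_coordinate
    by (intro Bochner_Integration.integral_sum integrable_measure_pmf_finite fin)
  also have "\<dots> = (\<Sum>j\<in>UNIV. ((1 - \<eta>) * ?u j)\<^sup>2 + (?r - 1) * (\<Sum>i<n. (\<eta> / real n * (?u j - ?D j i))\<^sup>2)
      + c / real n * (\<Sum>i<n. p * (?u j)\<^sup>2 + (1 - p) * (?D j i)\<^sup>2))"
    by (intro sum.cong refl expectation_coordinate_step[OF fin _ mean pair pr])
      (simp add: indicator_def)
  also have "\<dots> \<le> (\<Sum>j\<in>UNIV. (1 - \<eta>) * ((?u j)\<^sup>2 + c / real n * (\<Sum>i<n. (?D j i)\<^sup>2)))"
    by (intro sum_mono coordinate_step_bound[OF n \<eta> r p step_size c])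
  also have "\<dots> = (1 - \<eta>) * lyapunov n e c w b"
    by (simp add: lyapunov_coordinates sum_distrib_left)
  finally show ?thesis .
qed

lemma expectation_round_lyapunov:
  fixes w :: "real^'d::finite"
  assumes k: "1 \<le> k" "k \<le> CARD('d)" and n: "n > 0" and \<eta>: "\<eta> > 0"
    and step_size: "\<eta> * (1 + 8 / real n * (real CARD('d) / real k - 1)) \<le> 1"
      "\<eta> \<le> real k / real CARD('d) / 2"
    and c: "c = 4 * \<eta>\<^sup>2 * (real CARD('d) / real k - 1) / (real n * (real k / real CARD('d)))"
  shows "measure_pmf.expectation (choices_pmf k ({m} \<times> {..<n}))
      (\<lambda>S. lyapunov n e c (step_w n k e \<eta> w b (\<lambda>i. S (m, i))) (step_b e w b (\<lambda>i. S (m, i))))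
    \<le> (1 - \<eta>) * lyapunov n e c w b"
proof -
  let ?M = "map_pmf (\<lambda>S i. S (m, i)) (choices_pmf k ({m} \<times> {..<n}) :: (nat \<times> nat \<Rightarrow> 'd set) pmf)"
  have "finite (set_pmf ?M)"
    using finite_set_choices_pmf[OF k(2)] by simp
  moreover have "real k / real CARD('d) * (real CARD('d) / real k) = 1"
    using k by simp
  moreover have "real CARD('d) / real k \<ge> 1"
    using k by simp
  ultimately have "measure_pmf.expectation ?M
      (\<lambda>T. lyapunov n e c (step_w n k e \<eta> w b T) (step_b e w b T)) \<le> (1 - \<eta>) * lyapunov n e c w b"
    using round_moments[OF k] by (intro lyapunov_step_contraction[OF _ _ _ _ n \<eta> _ step_size c]) auto
  then show ?thesis
    by simp
qed

section \<open>Iterating over independent rounds\<close>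

lemma step_w_cong:
  fixes b b' :: "nat \<Rightarrow> real^'d"
  assumes "\<And>i. i < n \<Longrightarrow> b i = b' i" "\<And>i. i < n \<Longrightarrow> T i = T' i"
  shows "step_w n k e \<eta> w b T = step_w n k e \<eta> w b' T'"
proof -
  have "(\<Sum>i<n. \<chi> j. if j \<in> T i
        then b i $ j + (real CARD('d) / real k) * (gradF e i w $ j - b i $ j) else b i $ j)
      = (\<Sum>i<n. \<chi> j. if j \<in> T' i
        then b' i $ j + (real CARD('d) / real k) * (gradF e i w $ j - b' i $ j) else b' i $ j)"
    using assms by (intro sum.cong) auto
  then show ?thesis
    unfolding step_w_def by simp
qed

lemma lyapunov_cong:
  assumes "\<And>i. i < n \<Longrightarrow> b i = b' i"
  shows "lyapunov n e c w b = lyapunov n e c w b'"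
proof -
  have "(\<Sum>i<n. (norm (b i - gradF e i (wstar n e)))\<^sup>2) = (\<Sum>i<n. (norm (b' i - gradF e i (wstar n e)))\<^sup>2)"
    using assms by (intro sum.cong) auto
  then show ?thesis
    unfolding lyapunov_def by simp
qed

text \<open>The memories of nodes \<open>i \<ge> n\<close> also depend on \<open>S\<close>, but nothing reads them.\<close>

lemma traj_local:
  assumes "\<And>t' i. t' < t \<Longrightarrow> i < n \<Longrightarrow> S (t', i) = S' (t', i)"
  shows "fst (traj n k e \<eta> w0 S t) = fst (traj n k e \<eta> w0 S' t)
    \<and> (\<forall>i<n. snd (traj n k e \<eta> w0 S t) i = snd (traj n k e \<eta> w0 S' t) i)"
  using assms
proof (induction t)
  case 0
  then show ?case
    by simp
next
  case (Suc t)
  then show ?case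
    unfolding traj_Suc_step by (auto intro!: step_w_cong simp: step_b_def)
qed

lemma lyapunov_traj_Suc_merge:
  fixes S T :: "nat \<times> nat \<Rightarrow> 'd::finite set" and m n :: nat
  defines "S' \<equiv> (\<lambda>x. if x \<in> {..<m} \<times> {..<n} then S x else T x)"
  shows "lyapunov n e c (fst (traj n k e \<eta> w0 S' (Suc m))) (snd (traj n k e \<eta> w0 S' (Suc m)))
    = lyapunov n e c
        (step_w n k e \<eta> (fst (traj n k e \<eta> w0 S m)) (snd (traj n k e \<eta> w0 S m)) (\<lambda>i. T (m, i)))
        (step_b e (fst (traj n k e \<eta> w0 S m)) (snd (traj n k e \<eta> w0 S m)) (\<lambda>i. T (m, i)))"
proof -
  have history: "fst (traj n k e \<eta> w0 S' m) = fst (traj n k e \<eta> w0 S m)"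
    "\<And>i. i < n \<Longrightarrow> snd (traj n k e \<eta> w0 S' m) i = snd (traj n k e \<eta> w0 S m) i"
    using traj_local[of m n S' S] by (auto simp: S'_def)
  have round: "(\<lambda>i. S' (m, i)) = (\<lambda>i. T (m, i))"
    by (auto simp: S'_def)
  show ?thesis
    unfolding traj_Suc_step fst_conv snd_conv round history(1)
    by (rule trans[OF arg_cong2[where f = "lyapunov n e c", OF step_w_cong refl] lyapunov_cong])
      (auto simp: history(2) step_b_def)
qed

lemma expectation_lyapunov_traj_le:
  fixes e :: "nat \<Rightarrow> real^'d::finite" and w0 :: "real^'d"
  assumes k: "1 \<le> k" "k \<le> CARD('d)" and n: "n > 0" and \<eta>: "\<eta> > 0"
    and step_size: "\<eta> * (1 + 8 / real n * (real CARD('d) / real k - 1)) \<le> 1"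
      "\<eta> \<le> real k / real CARD('d) / 2"
    and c: "c = 4 * \<eta>\<^sup>2 * (real CARD('d) / real k - 1) / (real n * (real k / real CARD('d)))"
  shows "measure_pmf.expectation (choices_pmf k ({..<m} \<times> {..<n}))
      (\<lambda>S. lyapunov n e c (fst (traj n k e \<eta> w0 S m)) (snd (traj n k e \<eta> w0 S m)))
    \<le> (1 - \<eta>) ^ m * lyapunov n e c w0 (\<lambda>_. 0)"
proof (induction m)
  case 0
  then show ?case
    by (simp add: choices_pmf_def)
next
  case (Suc m)
  let ?\<Phi> = "\<lambda>m S. lyapunov n e c (fst (traj n k e \<eta> w0 S m)) (snd (traj n k e \<eta> w0 S m))"
  have round: "measure_pmf.expectation (choices_pmf k ({m} \<times> {..<n}))
      (\<lambda>T. ?\<Phi> (Suc m) (\<lambda>x. if x \<in> {..<m} \<times> {..<n} then S x else T x)) \<le> (1 - \<eta>) * ?\<Phi> m S" for S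
    unfolding lyapunov_traj_Suc_merge by (rule expectation_round_lyapunov[OF k n \<eta> step_size c])
  have fin: "finite (set_pmf (choices_pmf k ({..<m} \<times> {..<n}) :: (nat \<times> nat \<Rightarrow> 'd set) pmf))"
    "finite (set_pmf (choices_pmf k ({m} \<times> {..<n}) :: (nat \<times> nat \<Rightarrow> 'd set) pmf))"
    using finite_set_choices_pmf[OF k(2)] by simp_all
  have "measure_pmf.expectation (choices_pmf k ({..<Suc m} \<times> {..<n})) (?\<Phi> (Suc m))
      \<le> measure_pmf.expectation (choices_pmf k ({..<m} \<times> {..<n})) (\<lambda>S. (1 - \<eta>) * ?\<Phi> m S)"
    unfolding choices_pmf_Suc integral_map_pmf
    by (rule expectation_pair_pmf_le[OF fin]) (simp only: prod.case round)
  also have "\<dots> \<le> (1 - \<eta>) * ((1 - \<eta>) ^ m * lyapunov n e c w0 (\<lambda>_. 0))"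
  proof -
    have "\<eta> \<le> 1"
      using k by (intro order_trans[OF step_size(2)]) simp
    then show ?thesis
      using Suc.IH by (simp add: mult_left_mono)
  qed
  finally show ?case
    by (simp add: mult.assoc)
qed

theorem theorem4:
  fixes e :: "nat \<Rightarrow> real^'d::finite" and w0 :: "real^'d"
    and n k :: nat and \<eta> :: real
  assumes "n \<ge> 1" and "1 \<le> k" and "k \<le> CARD('d)" and "\<eta> > 0"
    and "\<eta> \<le> min (1 / (1 + (8 / real n) * (real CARD('d) / real k - 1)))
                  ((real k / real CARD('d)) / 2)"
  shows "\<forall>t::nat.
    measure_pmf.expectation (pmf_of_set (Omega n k t :: (nat \<times> nat \<Rightarrow> 'd set) set))
      (\<lambda>S. (norm (fst (traj n k e \<eta> w0 S (Suc t)) - wstar n e))\<^sup>2)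
    \<le> (1 - \<eta>) ^ (t + 1) *
       ((norm (w0 - wstar n e))\<^sup>2 + (1 / real n) * (\<Sum>i<n. (norm (gradF e i (wstar n e)))\<^sup>2))"
proof
  fix t :: nat
  let ?r = "real CARD('d) / real k" and ?p = "real k / real CARD('d)"
  define c where "c = 4 * \<eta>\<^sup>2 * (?r - 1) / (real n * ?p)"
  have n: "n > 0" and r: "?r \<ge> 1" and pr: "?p * ?r = 1"
    using assms(1-3) by auto
  note step_size = le_min_step_size[OF r assms(5)]
  have "\<eta> \<le> 1"
    using assms(3) by (intro order_trans[OF step_size(2)]) simp
  have c_bounds: "0 \<le> c" "c \<le> 1"
    unfolding c_def using lyapunov_weight_bounds[OF n r pr] assms(4) step_size(2) by simp_all
  show "measure_pmf.expectation (pmf_of_set (Omega n k t :: (nat \<times> nat \<Rightarrow> 'd set) set))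
      (\<lambda>S. (norm (fst (traj n k e \<eta> w0 S (Suc t)) - wstar n e))\<^sup>2)
    \<le> (1 - \<eta>) ^ (t + 1) *
      ((norm (w0 - wstar n e))\<^sup>2 + (1 / real n) * (\<Sum>i<n. (norm (gradF e i (wstar n e)))\<^sup>2))"
    (is "?error \<le> _ * ?initial")
  proof -
    have "?error \<le> measure_pmf.expectation (choices_pmf k ({..<Suc t} \<times> {..<n}))
        (\<lambda>S. lyapunov n e c (fst (traj n k e \<eta> w0 S (Suc t))) (snd (traj n k e \<eta> w0 S (Suc t))))"
      unfolding pmf_of_set_Omega[OF assms(3)]
      by (intro integral_mono integrable_measure_pmf_finite finite_set_choices_pmf assms(3)
          finite_cartesian_product finite_lessThan norm_le_lyapunov c_bounds)
    also have "\<dots> \<le> (1 - \<eta>) ^ (t + 1) * lyapunov n e c w0 (\<lambda>_. 0)"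
      unfolding Suc_eq_plus1[symmetric]
      by (rule expectation_lyapunov_traj_le[OF assms(2,3) n assms(4) step_size c_def])
    also have "\<dots> \<le> (1 - \<eta>) ^ (t + 1) * ?initial"
      using \<open>\<eta> \<le> 1\<close> by (intro mult_left_mono lyapunov_initial_le c_bounds) auto
    finally show ?thesis .
  qed
qed

end
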